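(* Fix an integer $N\ge2$ and $n,m\in\{0,\dots,N-1\}$. There exists a rational function $\widehat R_{n,m}(X)\in\mathbb{Q}(X)$, independent of $p$, with no pole at $X=-1$ nor at any primitive $2p$-th root of unity for odd $p\ge 2N+1$, such that for every odd $p\ge2N+1$ and every primitive $2p$-th root of unity $A$, with $c=\frac{p-1}{2}-N$: (i) $R^{(c)}_{n,m}=\widehat R_{n,m}(A)$, where $$R^{(c)}_{n,m}=\frac{\{m\}!\,\{2c+2n+1\}!!\,\{2c+n+1\}^+!}{\{n\}!\,\{2c+2m+1\}!!\,\{2c+m+1\}^+!};$$ (ii) $\widehat R_{n,m}(-1)=\dfrac{(-4)^{n-m}\,m!\,(N-1-m)!}{n!\,(N-1-n)!}$.
   Context: For a primitive $2p$-th root of unity $A$ ($p$ odd) and an integer $k$: $\{k\}=(-A)^k-(-A)^{-k}$, $\{k\}^+=(-A)^k+(-A)^{-k}$; for $k\ge1$, $\{k\}!=\{1\}\cdots\{k\}$ and $\{k\}^+!=\{1\}^+\cdots\{k\}^+$, with $\{0\}!=\{0\}^+!=1$; $\{k\}!!=\{k\}\{k-2\}\{k-4\}\cdots$ (product of the positive terms of the same parity down to $1$ or $2$). The quantity $R^{(c)}_{n,m}$ is the ratio $((Q'_n,Q'_n))/((Q'_m,Q'_m))$ of Hopf-pairing norms of the basis vectors $Q'^{(c)}_n$ of the $SO(3)$-TQFT space of the one-holed torus, but the claim concerns only the displayed formula. *)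

theory Defs
  imports Complex_Main "HOL-Computational_Algebra.Polynomial"
begin

definition qint :: "complex \<Rightarrow> nat \<Rightarrow> complex" where
  "qint A k = (-A) ^ k - inverse ((-A) ^ k)"

definition qintp :: "complex \<Rightarrow> nat \<Rightarrow> complex" where
  "qintp A k = (-A) ^ k + inverse ((-A) ^ k)"

definition qfact :: "complex \<Rightarrow> nat \<Rightarrow> complex" where
  "qfact A k = (\<Prod>i = 1..k. qint A i)"

definition qfactp :: "complex \<Rightarrow> nat \<Rightarrow> complex" where
  "qfactp A k = (\<Prod>i = 1..k. qintp A i)"

definition qdfact :: "complex \<Rightarrow> nat \<Rightarrow> complex" where
  "qdfact A k = (\<Prod>i \<in> {i. 1 \<le> i \<and> i \<le> k \<and> even (k - i)}. qint A i)"

definition primitive_root_of_unity :: "nat \<Rightarrow> complex \<Rightarrow> bool" where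
  "primitive_root_of_unity r A \<longleftrightarrow> A ^ r = 1 \<and> (\<forall>k. 0 < k \<and> k < r \<longrightarrow> A ^ k \<noteq> 1)"

definition Rc :: "complex \<Rightarrow> nat \<Rightarrow> nat \<Rightarrow> nat \<Rightarrow> complex" where
  "Rc A c n m =
     (qfact A m * qdfact A (2*c + 2*n + 1) * qfactp A (2*c + n + 1)) /
     (qfact A n * qdfact A (2*c + 2*m + 1) * qfactp A (2*c + m + 1))"

definition cpoly :: "rat poly \<Rightarrow> complex \<Rightarrow> complex" where
  "cpoly P z = poly (map_poly of_rat P) z"

end

theory Submission imports Defs begin

(*
  Write q = -A.  Every quantum integer is a rational polynomial in A
  divided by a power of q:
      {k} = (A^2 - 1) * [k](A) / q^k,    {k}^+ = (A^(2k) + 1) / q^k,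
  where [k](X) = 1 + X^2 + ... + X^(2k-2) takes the value k at X = -1.  Hence products of
  quantum integers are "Laurent representations" E^k * poly / q^e, and these multiply.

  If A is a primitive 2p-th root of unity with p odd, then q^p = 1, which gives the
  reflections {p-j} = -{j} and {p-j}^+ = {j}^+.  With c = (p-1)/2 - N we have 2c+1 = p-2N,
  so the double factorial and the (+)-factorial in R^(c)_(n,m) split into a common factor
  (depending on p) times the p-independent block
      S_N(k) = prod_(j=1..k) -( {2N-2j} * {2N-j}^+ ),
  and R^(c)_(n,m) = {m}! S_N(n) / ({n}! S_N(m)).  Inserting the Laurent representations,
  the factors (A^2-1)^(n+m) cancel and R^(c)_(n,m) = P(A)/Q(A) with P = Rnum N n m and
  Q = Rnum N m n.  Finally P(-1) and Q(-1) are computed from [k](-1) = k and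
  (X^(2k)+1)(-1) = 2, which yields the factorial formula.
*)

lemma map_poly_of_rat_add:
  "map_poly (of_rat :: rat \<Rightarrow> 'a::field_char_0) (p + q) = map_poly of_rat p + map_poly of_rat q"
  by (rule poly_eqI) (simp add: coeff_map_poly of_rat_add)

lemma map_poly_of_rat_mult:
  "map_poly (of_rat :: rat \<Rightarrow> 'a::field_char_0) (p * q) = map_poly of_rat p * map_poly of_rat q"
  by (rule poly_eqI) (simp add: coeff_map_poly coeff_mult of_rat_sum of_rat_mult)

lemma map_poly_of_rat_uminus:
  "map_poly (of_rat :: rat \<Rightarrow> 'a::field_char_0) (- p) = - map_poly of_rat p"
  by (rule poly_eqI) (simp add: coeff_map_poly of_rat_minus)

lemma cpoly_add [simp]: "cpoly (p + q) z = cpoly p z + cpoly q z"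
  by (simp add: cpoly_def map_poly_of_rat_add)

lemma cpoly_mult [simp]: "cpoly (p * q) z = cpoly p z * cpoly q z"
  by (simp add: cpoly_def map_poly_of_rat_mult)

lemma cpoly_uminus [simp]: "cpoly (- p) z = - cpoly p z"
  by (simp add: cpoly_def map_poly_of_rat_uminus)

lemma cpoly_1 [simp]: "cpoly 1 z = 1"
  by (simp add: cpoly_def)

lemma cpoly_monom [simp]: "cpoly (monom c k) z = of_rat c * z ^ k"
  by (simp add: cpoly_def map_poly_monom poly_monom)

lemma cpoly_power [simp]: "cpoly (p ^ k) z = cpoly p z ^ k"
  by (induction k) simp_all

lemma cpoly_prod [simp]: "cpoly (\<Prod>i\<in>I. f i) z = (\<Prod>i\<in>I. cpoly (f i) z)"
  by (induction I rule: infinite_finite_induct) simp_all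

lemma cpoly_sum [simp]: "cpoly (\<Sum>i\<in>I. f i) z = (\<Sum>i\<in>I. cpoly (f i) z)"
  by (induction I rule: infinite_finite_induct) (simp_all add: cpoly_def map_poly_of_rat_add)

text \<open>The polynomial -X, whose powers are the denominators q^e = (-A)^e.\<close>

definition negX :: "rat poly" where
  "negX = [:0, -1:]"

lemma cpoly_negX [simp]: "cpoly negX z = - z"
  by (simp add: negX_def cpoly_def map_poly_pCons of_rat_minus)

lemma poly_negX [simp]: "poly negX (-1) = 1"
  by (simp add: negX_def)

text \<open>Numerators of {k} and {k}^+: the Gaussian integer [k](X) = sum of X^(2i), i < k,
  and X^(2k) + 1.\<close>

definition qnum :: "nat \<Rightarrow> rat poly" where
  "qnum k = (\<Sum>i<k. monom 1 (2 * i))"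

definition qnump :: "nat \<Rightarrow> rat poly" where
  "qnump k = monom 1 (2 * k) + 1"

lemma qint_laurent:
  assumes "z \<noteq> 0"
  shows "qint z k = (z^2 - 1) * cpoly (qnum k) z / (-z) ^ k"
proof -
  have "(z^2 - 1) * cpoly (qnum k) z = (z^2) ^ k - 1"
    by (simp add: qnum_def power_mult power_diff_1_eq)
  also have "(z^2) ^ k = (-z) ^ k * (-z) ^ k"
    by (simp add: power2_eq_square flip: power_mult_distrib)
  finally show ?thesis
    using assms by (simp add: qint_def field_simps)
qed

lemma qintp_laurent:
  assumes "z \<noteq> 0"
  shows "qintp z k = cpoly (qnump k) z / (-z) ^ k"
proof -
  have "cpoly (qnump k) z = (-z) ^ k * (-z) ^ k + 1"
    by (simp add: qnump_def power_mult power2_eq_square flip: power_mult_distrib)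
  then show ?thesis
    using assms by (simp add: qintp_def field_simps)
qed

lemma prod_laurent:
  assumes "\<And>i. i \<in> I \<Longrightarrow> w i = E * cpoly (a i) z / (-z) ^ e i"
  shows "(\<Prod>i\<in>I. w i) = E ^ card I * cpoly (\<Prod>i\<in>I. a i) z / (-z) ^ (\<Sum>i\<in>I. e i)"
  using assms by (simp add: prod.distrib prod_dividef power_sum)

lemma laurent_ratio:
  fixes E x a b c d :: "'a::field"
  assumes "E \<noteq> 0" "x \<noteq> 0"
  shows "(E^m * a / x^i) * (E^n * b / x^j) / ((E^n * c / x^k) * (E^m * d / x^l))
       = (a * b * x^(k + l)) / (c * d * x^(i + j))"
  using assms by (simp add: power_add field_simps)

definition qshift :: "complex \<Rightarrow> nat \<Rightarrow> nat \<Rightarrow> complex" where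
  "qshift z N k = (\<Prod>j = 1..k. - (qint z (2*N - 2*j) * qintp z (2*N - j)))"

definition qfact_num :: "nat \<Rightarrow> rat poly" where
  "qfact_num k = (\<Prod>i = 1..k. qnum i)"

definition qfact_deg :: "nat \<Rightarrow> nat" where
  "qfact_deg k = (\<Sum>i = 1..k. i)"

definition qshift_num :: "nat \<Rightarrow> nat \<Rightarrow> rat poly" where
  "qshift_num N k = (\<Prod>j = 1..k. - (qnum (2*N - 2*j) * qnump (2*N - j)))"

definition qshift_deg :: "nat \<Rightarrow> nat \<Rightarrow> nat" where
  "qshift_deg N k = (\<Sum>j = 1..k. (2*N - 2*j) + (2*N - j))"

lemma qfact_laurent:
  assumes "z \<noteq> 0"
  shows "qfact z k = (z^2 - 1) ^ k * cpoly (qfact_num k) z / (-z) ^ qfact_deg k"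
  using prod_laurent[of "{1..k}" "qint z" "z^2 - 1" qnum z "\<lambda>i. i"] qint_laurent[OF assms]
  by (simp add: qfact_def qfact_num_def qfact_deg_def)

lemma qshift_laurent:
  assumes "z \<noteq> 0"
  shows "qshift z N k = (z^2 - 1) ^ k * cpoly (qshift_num N k) z / (-z) ^ qshift_deg N k"
proof -
  have "- (qint z a * qintp z b) = (z^2 - 1) * cpoly (- (qnum a * qnump b)) z / (-z) ^ (a + b)"
    for a b
    using assms by (simp add: qint_laurent qintp_laurent power_add)
  then show ?thesis
    using prod_laurent[of "{1..k}" "\<lambda>j. - (qint z (2*N - 2*j) * qintp z (2*N - j))" "z^2 - 1"
        "\<lambda>j. - (qnum (2*N - 2*j) * qnump (2*N - j))" z "\<lambda>j. (2*N - 2*j) + (2*N - j)"]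
    by (simp add: qshift_def qshift_num_def qshift_deg_def)
qed

text \<open>The numerator of the rational function; the denominator is Rnum N m n.\<close>

definition Rnum :: "nat \<Rightarrow> nat \<Rightarrow> nat \<Rightarrow> rat poly" where
  "Rnum N n m = qfact_num m * qshift_num N n * negX ^ (qfact_deg n + qshift_deg N m)"

lemma cpoly_Rnum:
  "cpoly (Rnum N n m) z = cpoly (qfact_num m) z * cpoly (qshift_num N n) z * (-z) ^ (qfact_deg n + qshift_deg N m)"
  by (simp add: Rnum_def)

lemma poly_qnum: "poly (qnum k) (-1) = of_nat k"
  by (simp add: qnum_def poly_sum poly_monom)

lemma poly_qnump: "poly (qnump k) (-1) = 2"
  by (simp add: qnump_def poly_monom)

lemma poly_qfact_num: "poly (qfact_num k) (-1) = fact k"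
  by (simp add: qfact_num_def poly_prod poly_qnum fact_prod)

lemma falling_fact:
  assumes "k \<le> M"
  shows "(\<Prod>j = 1..k. of_nat (Suc M - j)) * fact (M - k) = (fact M :: 'a::{comm_semiring_1, semiring_char_0})"
  using assms
proof (induction k)
  case 0
  then show ?case by simp
next
  case (Suc k)
  have "M - k = Suc (M - Suc k)" and "Suc M - Suc k = M - k"
    using Suc.prems by simp_all
  then have "of_nat (Suc M - Suc k) * fact (M - Suc k) = (fact (M - k) :: 'a)"
    by (metis fact_Suc)
  with Suc show ?case
    by (simp add: mult.assoc)
qed

lemma poly_qshift_num:
  assumes "k < N"
  shows "poly (qshift_num N k) (-1) = (-4) ^ k * fact (N - 1) / fact (N - 1 - k)"
proof -
  have factor: "- (of_nat (2*N - 2*j) * 2) = (-4) * (of_nat (Suc (N - 1) - j) :: rat)" for j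
    using assms by simp
  have "poly (qshift_num N k) (-1) = (\<Prod>j = 1..k. (-4) * (of_nat (Suc (N - 1) - j) :: rat))"
    by (simp add: qshift_num_def poly_prod poly_qnum poly_qnump factor)
  also have "\<dots> = (-4) ^ k * (\<Prod>j = 1..k. of_nat (Suc (N - 1) - j))"
    by (simp only: prod.distrib prod_constant card_atLeastAtMost) simp
  also have "\<dots> = (-4) ^ k * fact (N - 1) / fact (N - 1 - k)"
    using falling_fact[of k "N - 1", where 'a = rat] assms by (simp add: field_simps)
  finally show ?thesis .
qed

lemma poly_Rnum:
  assumes "n < N"
  shows "poly (Rnum N n m) (-1) = fact m * ((-4) ^ n * fact (N - 1) / fact (N - 1 - n))"
  using assms by (simp add: Rnum_def poly_qfact_num poly_qshift_num)

lemma Rnum_ratio_at_minus_one: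
  assumes "n < N" and "m < N"
  shows "poly (Rnum N n m) (-1) / poly (Rnum N m n) (-1) =
      (-4) powi (int n - int m) * fact m * fact (N - 1 - m) / (fact n * fact (N - 1 - n))"
proof -
  have "poly (Rnum N n m) (-1) / poly (Rnum N m n) (-1) =
      (-4) ^ n / (-4) ^ m * fact m * fact (N - 1 - m) / (fact n * fact (N - 1 - n))"
    using assms by (simp add: poly_Rnum ac_simps)
  then show ?thesis
    by (simp add: power_int_diff)
qed

lemma qdfact_Suc_Suc: "qdfact z (k + 2) = qint z (k + 2) * qdfact z k"
proof -
  have "{i. 1 \<le> i \<and> i \<le> k + 2 \<and> even (k + 2 - i)} = insert (k + 2) {i. 1 \<le> i \<and> i \<le> k \<and> even (k - i)}"
    by (auto simp: le_Suc_eq Suc_diff_le)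
  moreover have "finite {i. 1 \<le> i \<and> i \<le> k \<and> even (k - i)}"
    by (rule finite_subset[of _ "{..k}"]) auto
  ultimately show ?thesis
    by (simp add: qdfact_def)
qed

lemma qdfact_extend: "qdfact z (d + 2*k) = qdfact z d * (\<Prod>j = 1..k. qint z (d + 2*j))"
proof (induction k)
  case 0
  then show ?case by simp
next
  case (Suc k)
  have "qdfact z (d + 2 * Suc k) = qint z (d + 2 * Suc k) * qdfact z (d + 2*k)"
    using qdfact_Suc_Suc[of z "d + 2*k"] by simp
  with Suc show ?case
    by simp
qed

lemma qfactp_extend: "qfactp z (d + k) = qfactp z d * (\<Prod>j = 1..k. qintp z (d + j))"
  by (induction k) (simp_all add: qfactp_def)

locale odd_prim_root =
  fixes p :: nat and A :: complex
  assumes odd_p: "odd p" and p_gt_1: "p > 1"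
    and prim: "primitive_root_of_unity (2*p) A"
begin

lemma A_pow_2p: "A ^ (2*p) = 1"
  using prim by (simp add: primitive_root_of_unity_def)

lemma A_pow_neq_1: "0 < k \<Longrightarrow> k < 2*p \<Longrightarrow> A ^ k \<noteq> 1"
  using prim by (simp add: primitive_root_of_unity_def)

lemma A_nonzero: "A \<noteq> 0"
  using A_pow_2p p_gt_1 by (auto simp: power_0_left)

lemma A_sq_neq_1: "A^2 - 1 \<noteq> 0"
  using A_pow_neq_1[of 2] p_gt_1 by simp

lemma minus_A_pow_p: "(-A) ^ p = 1"
proof -
  have "(A ^ p)^2 = 1"
    using A_pow_2p by (simp flip: power_mult add: mult.commute)
  moreover have "A ^ p \<noteq> 1"
    using A_pow_neq_1[of p] p_gt_1 by simp
  ultimately have "A ^ p = -1"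
    by (simp add: power2_eq_1_iff)
  then show ?thesis
    using odd_p by (simp add: power_minus_odd)
qed

lemma minus_A_pow_reflect:
  assumes "j \<le> p"
  shows "(-A) ^ (p - j) = inverse ((-A) ^ j)"
proof -
  have "(-A) ^ (p - j) * (-A) ^ j = 1"
    using minus_A_pow_p assms by (simp flip: power_add)
  then show ?thesis
    using A_nonzero by (simp add: field_simps inverse_eq_divide)
qed

lemma qint_reflect: "j \<le> p \<Longrightarrow> qint A (p - j) = - qint A j"
  using minus_A_pow_reflect A_nonzero by (simp add: qint_def)

lemma qintp_reflect: "j \<le> p \<Longrightarrow> qintp A (p - j) = qintp A j"
  using minus_A_pow_reflect A_nonzero by (simp add: qintp_def)

lemma qint_nonzero:
  assumes "0 < k" "k < p"
  shows "qint A k \<noteq> 0"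
proof
  assume "qint A k = 0"
  then have "(-A) ^ k * (-A) ^ k = 1"
    using A_nonzero by (simp add: qint_def field_simps)
  then have "A ^ (2*k) = 1"
    by (metis power2_minus power_mult power_mult_distrib power2_eq_square mult.commute)
  with A_pow_neq_1[of "2*k"] assms show False by simp
qed

lemma qintp_nonzero: "qintp A k \<noteq> 0"
proof
  assume "qintp A k = 0"
  then have "(-A) ^ k * (-A) ^ k = -1"
    using A_nonzero by (simp add: qintp_def field_simps add_eq_0_iff)
  then have "((-A) ^ k * (-A) ^ k) ^ p = -1"
    using odd_p by simp
  moreover have "((-A) ^ k) ^ p = 1"
    by (metis power_mult mult.commute minus_A_pow_p power_one)
  then have "((-A) ^ k * (-A) ^ k) ^ p = 1"
    by (simp only: power_mult_distrib) simp
  ultimately show False by simp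
qed

lemma qfact_nonzero: "k < p \<Longrightarrow> qfact A k \<noteq> 0"
  by (simp add: qfact_def qint_nonzero)

lemma qdfact_nonzero: "k < p \<Longrightarrow> qdfact A k \<noteq> 0"
  by (simp add: qdfact_def qint_nonzero)

lemma qfactp_nonzero: "qfactp A k \<noteq> 0"
  by (simp add: qfactp_def qintp_nonzero)

lemma qshift_nonzero: "k < N \<Longrightarrow> 2*N < p \<Longrightarrow> qshift A N k \<noteq> 0"
  by (simp add: qshift_def qint_nonzero qintp_nonzero)

text \<open>By reflection, extending the factorials from p - 2N by k steps multiplies them by
  the p-independent block S_N(k).\<close>

lemma extend_by_qshift:
  assumes "k \<le> N" "2*N \<le> p"
  shows "qdfact A (p - 2*N + 2*k) * qfactp A (p - 2*N + k) =
         qdfact A (p - 2*N) * qfactp A (p - 2*N) * qshift A N k"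
proof -
  have "(\<Prod>j = 1..k. qint A (p - 2*N + 2*j)) = (\<Prod>j = 1..k. - qint A (2*N - 2*j))"
  proof (rule prod.cong)
    fix j assume "j \<in> {1..k}"
    then have "p - 2*N + 2*j = p - (2*N - 2*j)" "2*N - 2*j \<le> p" using assms by auto
    then show "qint A (p - 2*N + 2*j) = - qint A (2*N - 2*j)" by (metis qint_reflect)
  qed simp
  moreover have "(\<Prod>j = 1..k. qintp A (p - 2*N + j)) = (\<Prod>j = 1..k. qintp A (2*N - j))"
  proof (rule prod.cong)
    fix j assume "j \<in> {1..k}"
    then have "p - 2*N + j = p - (2*N - j)" "2*N - j \<le> p" using assms by auto
    then show "qintp A (p - 2*N + j) = qintp A (2*N - j)" by (metis qintp_reflect)
  qed simp
  ultimately show ?thesis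
    by (simp add: qdfact_extend qfactp_extend qshift_def prod.distrib[symmetric])
qed

lemma Rc_reduced:
  assumes "n < N" "m < N" "2*N < p"
  shows "Rc A ((p - 1) div 2 - N) n m = qfact A m * qshift A N n / (qfact A n * qshift A N m)"
proof -
  let ?c = "(p - 1) div 2 - N"
  define K where "K = qdfact A (p - 2*N) * qfactp A (p - 2*N)"
  have "2 * ?c + 1 = p - 2*N"
    using assms odd_p by (auto elim!: oddE)
  then have "2 * ?c + 2*k + 1 = p - 2*N + 2*k" "2 * ?c + k + 1 = p - 2*N + k" for k
    by simp_all
  then have block: "qdfact A (2 * ?c + 2*k + 1) * qfactp A (2 * ?c + k + 1) = K * qshift A N k"
    if "k \<le> N" for k
    unfolding K_def by (metis extend_by_qshift that assms(3) less_imp_le)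
  have "K \<noteq> 0"
    using assms by (simp add: K_def qdfact_nonzero qfactp_nonzero)
  moreover have "Rc A ?c n m = qfact A m * (K * qshift A N n) / (qfact A n * (K * qshift A N m))"
    unfolding Rc_def mult.assoc[of "qfact A m"] mult.assoc[of "qfact A n"]
    using block assms by simp
  ultimately show ?thesis
    by simp
qed

lemma Rc_rational:
  assumes "n < N" "m < N" "2*N < p"
  shows "cpoly (Rnum N m n) A \<noteq> 0"
    and "Rc A ((p - 1) div 2 - N) n m = cpoly (Rnum N n m) A / cpoly (Rnum N m n) A"
proof -
  note reps = qfact_laurent[OF A_nonzero] qshift_laurent[OF A_nonzero]
  have "qfact A n \<noteq> 0" "qshift A N m \<noteq> 0"
    using assms by (simp_all add: qfact_nonzero qshift_nonzero)
  then have "cpoly (qfact_num n) A \<noteq> 0" "cpoly (qshift_num N m) A \<noteq> 0"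
    by (auto simp: reps)
  then show "cpoly (Rnum N m n) A \<noteq> 0"
    using A_nonzero by (simp add: cpoly_Rnum)
  have "Rc A ((p - 1) div 2 - N) n m = qfact A m * qshift A N n / (qfact A n * qshift A N m)"
    using Rc_reduced assms .
  also have "\<dots> = cpoly (qfact_num m) A * cpoly (qshift_num N n) A * (-A) ^ (qfact_deg n + qshift_deg N m)
      / (cpoly (qfact_num n) A * cpoly (qshift_num N m) A * (-A) ^ (qfact_deg m + qshift_deg N n))"
    unfolding reps by (rule laurent_ratio) (use A_nonzero A_sq_neq_1 in auto)
  also have "\<dots> = cpoly (Rnum N n m) A / cpoly (Rnum N m n) A"
    by (simp add: cpoly_Rnum)
  finally show "Rc A ((p - 1) div 2 - N) n m = cpoly (Rnum N n m) A / cpoly (Rnum N m n) A" .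
qed

end

theorem lemma1:
  fixes N n m :: nat
  assumes "N \<ge> 2" and "n < N" and "m < N"
  shows "\<exists>P Q :: rat poly.
     poly Q (-1) \<noteq> 0 \<and>
     (\<forall>p A. odd p \<and> p \<ge> 2*N + 1 \<and> primitive_root_of_unity (2*p) A \<longrightarrow>
        cpoly Q A \<noteq> 0 \<and>
        Rc A ((p - 1) div 2 - N) n m = cpoly P A / cpoly Q A) \<and>
     poly P (-1) / poly Q (-1) =
       (-4) powi (int n - int m) * fact m * fact (N - 1 - m) / (fact n * fact (N - 1 - n))"
proof (intro exI conjI allI impI)
  show "poly (Rnum N m n) (-1) \<noteq> 0"
    using assms by (simp add: poly_Rnum)
  show "poly (Rnum N n m) (-1) / poly (Rnum N m n) (-1) =
      (-4) powi (int n - int m) * fact m * fact (N - 1 - m) / (fact n * fact (N - 1 - n))"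
    using assms(2,3) by (rule Rnum_ratio_at_minus_one)
next
  fix p A
  assume root: "odd p \<and> p \<ge> 2*N + 1 \<and> primitive_root_of_unity (2*p) A"
  then interpret odd_prim_root p A
    using assms by unfold_locales auto
  show "cpoly (Rnum N m n) A \<noteq> 0"
    and "Rc A ((p - 1) div 2 - N) n m = cpoly (Rnum N n m) A / cpoly (Rnum N m n) A"
    using Rc_rational assms root by auto
qed

end
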